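(* Let $\boldsymbol{\tau} \colon \mathsf{BPT} \to \mathbb K$ be a weighted troupe. For $n \geq 1$, let \[\omega_n = \sum_{T \in \mathsf{Branch}_n} \boldsymbol{\tau}(T)\quad\text{and}\quad\check{\omega}_n = \sum_{T \in \mathsf{BPT}_n} \boldsymbol{\tau}(T).\] Let \[\mathscr B(t) = \sum_{n \geq 1} \omega_n t^n\quad\text{and}\quad \mathscr T(t) = \sum_{n \geq 1} \check{\omega}_n t^n.\] Then $\mathscr B(t)$ is algebraic over $\mathbb K[t]$ if and only if $\mathscr T(t)$ is.
   Context: $\mathbb K$ is a commutative ring. $\mathsf{BPT}$ is the set of binary plane trees (rooted trees where each child is designated left or right, each vertex having at most one left and one right child), including the empty tree $\varnothing$; $\mathsf{BPT}_n$ is the set of those with $n$ vertices. A branch is a nonempty binary plane tree in which every vertex has at most one child; $\mathsf{Branch}_n$ is the set of branches with $n$ vertices. For nonempty binary plane trees $T_1,T_2$ and a vertex $v$ of $T_1$, the insertion $\nabla_v(T_1,T_2)$ is obtained by extending $v$ into a left edge (identifying $v$ with the bottom vertex and calling the new upper vertex $v^*$) and attaching $T_2$ as the right subtree of $v^*$. A weighted troupe is a function $\boldsymbol{\tau}\colon\mathsf{BPT}\to\mathbb K$ with $\boldsymbol{\tau}(\varnothing)=0$ and $\boldsymbol{\tau}(\nabla_v(T_1,T_2))=\boldsymbol{\tau}(T_1)\boldsymbol{\tau}(T_2)$ for all $T_1,T_2$ and all vertices $v\in T_1$. It is known (previous theorem) that $\mathscr T(t) = \mathscr B\left(\frac{t}{1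 - t\mathscr T(t)}\right)$. *)

theory Defs
  imports "HOL-Computational_Algebra.Polynomial_FPS"
begin

text \<open>Binary plane trees: Leaf is the empty tree, Node L R is a vertex whose left
  subtree is L and right subtree is R (an empty subtree means no child).\<close>
datatype bpt = Leaf | Node bpt bpt

fun nverts :: "bpt \<Rightarrow> nat" where
  "nverts Leaf = 0"
| "nverts (Node L R) = Suc (nverts L + nverts R)"

fun is_branch :: "bpt \<Rightarrow> bool" where
  "is_branch Leaf = False"
| "is_branch (Node Leaf Leaf) = True"
| "is_branch (Node L Leaf) = is_branch L"
| "is_branch (Node Leaf R) = is_branch R"
| "is_branch (Node L R) = False"

text \<open>insertion T1 T2 T  iff  T = nabla_v(T1,T2) for some vertex v of T1:
  the vertex v (with subtrees L, R) is replaced by a new vertex v* whose left child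
  is v (keeping L, R) and whose right subtree is T2.\<close>
inductive insertion :: "bpt \<Rightarrow> bpt \<Rightarrow> bpt \<Rightarrow> bool" where
  here: "insertion (Node L R) T2 (Node (Node L R) T2)"
| left: "insertion L T2 L' \<Longrightarrow> insertion (Node L R) T2 (Node L' R)"
| right: "insertion R T2 R' \<Longrightarrow> insertion (Node L R) T2 (Node L R')"

definition weighted_troupe :: "(bpt \<Rightarrow> 'a::comm_ring_1) \<Rightarrow> bool" where
  "weighted_troupe \<tau> \<longleftrightarrow> \<tau> Leaf = 0 \<and>
     (\<forall>T1 T2 T. T1 \<noteq> Leaf \<longrightarrow> T2 \<noteq> Leaf \<longrightarrow> insertion T1 T2 T \<longrightarrow> \<tau> T = \<tau> T1 * \<tau> T2)"

definition branch_gf :: "(bpt \<Rightarrow> 'a::comm_ring_1) \<Rightarrow> 'a fps" where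
  "branch_gf \<tau> = Abs_fps (\<lambda>n. if n = 0 then 0 else (\<Sum>T\<in>{T. is_branch T \<and> nverts T = n}. \<tau> T))"

definition tree_gf :: "(bpt \<Rightarrow> 'a::comm_ring_1) \<Rightarrow> 'a fps" where
  "tree_gf \<tau> = Abs_fps (\<lambda>n. if n = 0 then 0 else (\<Sum>T\<in>{T. nverts T = n}. \<tau> T))"

definition fps_algebraic :: "'a::comm_ring_1 fps \<Rightarrow> bool" where
  "fps_algebraic F \<longleftrightarrow> (\<exists>p :: 'a poly poly. p \<noteq> 0 \<and> poly (map_poly fps_of_poly p) F = 0)"

end

theory Submission
  imports Defs
begin

(* Deleting the right subtree R of a vertex with two children undoes an insertion, so the weight
   of the tree is tau(R) times the weight of what remains. Pruning a tree T in this way down to a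
   branch b gives tau(T) = tau(b) * prod tau(R). Summing over the trees that prune to a fixed branch with n
   vertices yields w^n for w = t / (1 - t T(t)), because every vertex of the branch carries an
   arbitrary sequence of pruned subtrees. Hence T = B o w, and inverting the substitution gives
   B = T o v with v = t / (1 + t B(t)). A substitution of this shape preserves algebraicity:
   substituting t := w in a relation P(t, F) = 0 and clearing the denominators of w yields a
   nonzero relation for F o w. *)

unbundle fps_syntax

lemma fps_cutoff_mult_cong:
  assumes "fps_cutoff n a = fps_cutoff n b" "fps_cutoff n c = fps_cutoff n d"
  shows "fps_cutoff n (a * c) = fps_cutoff n (b * d)"
  using assms unfolding fps_cutoff_eq_fps_cutoff_iff by (auto simp: fps_mult_nth intro!: sum.cong)

lemma fps_cutoff_power_cong:
  "fps_cutoff n a = fps_cutoff n b \<Longrightarrow> fps_cutoff n (a ^ k) = fps_cutoff n (b ^ k)"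
  by (induction k) (auto intro!: fps_cutoff_mult_cong)

lemma fps_compose_cutoff_cong_left:
  assumes "fps_cutoff n a = fps_cutoff n b"
  shows "fps_cutoff n (a oo c) = fps_cutoff n (b oo c)"
  using assms unfolding fps_cutoff_eq_fps_cutoff_iff
  by (auto simp: fps_compose_nth intro!: sum.cong)

lemma fps_compose_cutoff_cong_right:
  assumes "fps_cutoff n a = fps_cutoff n b"
  shows "fps_cutoff n (F oo a) = fps_cutoff n (F oo b)"
  using fps_cutoff_power_cong[OF assms] unfolding fps_cutoff_eq_fps_cutoff_iff
  by (auto simp: fps_compose_nth intro!: sum.cong)

lemma fps_cutoff_Suc_mult_cong:
  fixes v :: "'a::semiring_0 fps"
  assumes "v $ 0 = 0" "fps_cutoff n a = fps_cutoff n b"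
  shows "fps_cutoff (Suc n) (v * a) = fps_cutoff (Suc n) (v * b)"
  unfolding fps_cutoff_eq_fps_cutoff_iff fps_mult_nth
proof (intro allI impI sum.cong refl)
  fix j i assume "j < Suc n" "i \<in> {0..j}"
  with assms show "v $ i * a $ (j - i) = v $ i * b $ (j - i)"
    by (cases i) (simp_all add: fps_cutoff_eq_fps_cutoff_iff)
qed

lemma fps_cutoff_cutoff [simp]: "fps_cutoff n (fps_cutoff n a) = fps_cutoff n a"
  by (simp add: fps_eq_iff)

lemma fps_eq_cutoffI: "(\<And>n. fps_cutoff n a = fps_cutoff n b) \<Longrightarrow> a = b"
  by (metis fps_cutoff_eq_fps_cutoff_iff fps_ext lessI)

lemma fps_cutoff_eq_sum: "fps_cutoff n a = (\<Sum>i<n. fps_const (a $ i) * fps_X ^ i)"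
  by (simp add: fps_eq_iff fps_sum_nth mult_delta_right)

lemma fps_X_power_compose_ring:
  assumes "(c :: 'a::comm_ring_1 fps) $ 0 = 0"
  shows "fps_X ^ k oo c = c ^ k"
proof (rule fps_ext)
  fix n
  show "(fps_X ^ k oo c) $ n = c ^ k $ n"
    using startsby_zero_power_prefix[OF assms, of k]
    by (cases "k \<le> n") (simp_all add: fps_compose_nth mult_delta_left)
qed

lemma fps_compose_cutoff:
  assumes "(c :: 'a::comm_ring_1 fps) $ 0 = 0"
  shows "fps_cutoff n a oo c = (\<Sum>i<n. fps_const (a $ i) * c ^ i)"
  by (simp add: fps_cutoff_eq_sum fps_compose_sum_distrib fps_const_mult_apply_left[symmetric]
      fps_X_power_compose_ring[OF assms])

(* Formal_Power_Series has this only over integral domains; truncating a and b reduces it to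
   the polynomial case, which holds over any commutative ring. *)
lemma fps_compose_mult_distrib_ring:
  assumes c0: "(c :: 'a::comm_ring_1 fps) $ 0 = 0"
  shows "(a * b) oo c = (a oo c) * (b oo c)"
proof -
  have "fps_cutoff n (a * b oo c) = fps_cutoff n ((a oo c) * (b oo c))" for n
  proof -
    let ?m = "\<lambda>i j. fps_const (a $ i * b $ j)"
    have prod_X: "fps_cutoff n a * fps_cutoff n b = (\<Sum>i<n. \<Sum>j<n. ?m i j * fps_X ^ (i + j))"
      by (simp add: fps_cutoff_eq_sum sum_product power_add mult_ac)
    have prod_c:
      "(fps_cutoff n a oo c) * (fps_cutoff n b oo c) = (\<Sum>i<n. \<Sum>j<n. ?m i j * c ^ (i + j))"
      by (simp add: fps_compose_cutoff[OF c0] sum_product power_add mult_ac)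
    have poly_case:
      "fps_cutoff n a * fps_cutoff n b oo c = (fps_cutoff n a oo c) * (fps_cutoff n b oo c)"
      unfolding prod_X prod_c
      by (simp add: fps_compose_sum_distrib fps_const_mult_apply_left[symmetric]
          fps_X_power_compose_ring[OF c0])
    have "fps_cutoff n (a * b oo c) = fps_cutoff n (fps_cutoff n a * fps_cutoff n b oo c)"
      by (intro fps_compose_cutoff_cong_left fps_cutoff_mult_cong) simp_all
    also have "\<dots> = fps_cutoff n ((fps_cutoff n a oo c) * (fps_cutoff n b oo c))"
      by (simp only: poly_case)
    also have "\<dots> = fps_cutoff n ((a oo c) * (b oo c))"
      by (intro fps_cutoff_mult_cong fps_compose_cutoff_cong_left) simp_all
    finally show ?thesis .
  qed
  then show ?thesis by (rule fps_eq_cutoffI)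
qed

lemma fps_compose_power_ring:
  assumes "(c :: 'a::comm_ring_1 fps) $ 0 = 0"
  shows "(a oo c) ^ k = a ^ k oo c"
  by (induction k) (simp_all add: fps_compose_mult_distrib_ring[OF assms])

lemma fps_compose_assoc_ring:
  assumes b0: "b $ 0 = 0" and c0: "(c :: 'a::comm_ring_1 fps) $ 0 = 0"
  shows "a oo (b oo c) = a oo b oo c"
proof -
  have "fps_cutoff n (a oo (b oo c)) = fps_cutoff n (a oo b oo c)" for n
  proof -
    have "fps_cutoff n a oo (b oo c) = (\<Sum>i<n. fps_const (a $ i) * (b ^ i oo c))"
      by (simp add: fps_compose_cutoff b0 fps_compose_power_ring[OF c0])
    also have "\<dots> = fps_cutoff n a oo b oo c"
      by (simp add: fps_compose_cutoff[OF b0] fps_compose_sum_distrib fps_const_mult_apply_left)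
    finally have poly_case: "fps_cutoff n a oo (b oo c) = fps_cutoff n a oo b oo c" .
    show ?thesis
      by (metis poly_case fps_compose_cutoff_cong_left fps_cutoff_cutoff)
  qed
  then show ?thesis by (rule fps_eq_cutoffI)
qed

lemma fps_of_poly_compose:
  assumes "(c :: 'a::comm_ring_1 fps) $ 0 = 0"
  shows "fps_of_poly q oo c = poly (map_poly fps_const q) c"
  using fps_X_power_compose_ring[OF assms, of 1]
  by (induction q) (simp_all add: map_poly_pCons fps_of_poly_pCons fps_compose_add_distrib
      fps_compose_mult_distrib_ring[OF assms] mult.commute)

lemma fps_mult_right_cancel:
  fixes U a b :: "'a::comm_ring_1 fps"
  assumes "U $ 0 = 1" "a * U = b * U"
  shows "a = b"
proof -
  have inv: "U * fps_right_inverse U 1 = 1"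
    by (rule fps_right_inverse) (simp add: assms)
  have "a = a * U * fps_right_inverse U 1" by (simp add: inv mult.assoc)
  also have "\<dots> = b" by (simp add: assms(2) inv mult.assoc)
  finally show ?thesis .
qed

lemma fps_X_over_unit:
  fixes U :: "'a::comm_ring_1 fps"
  assumes "U $ 0 = 1"
  shows "fps_X * fps_right_inverse U 1 * U = fps_X"
proof -
  have "U * fps_right_inverse U 1 = 1"
    by (rule fps_right_inverse) (simp add: assms)
  then show ?thesis
    by (metis mult.assoc mult.commute mult_1_right)
qed

lemma fps_eq_by_contraction:
  fixes v y z :: "'a::comm_ring_1 fps"
  assumes v0: "v $ 0 = 0"
    and \<Phi>: "\<And>n f g. fps_cutoff n f = fps_cutoff n g \<Longrightarrow> fps_cutoff n (\<Phi> f) = fps_cutoff n (\<Phi> g)"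
    and y: "y = h + v * \<Phi> y" and z: "z = h + v * \<Phi> z"
  shows "y = z"
proof -
  have "fps_cutoff n y = fps_cutoff n z" for n
  proof (induction n)
    case (Suc n)
    have "fps_cutoff (Suc n) (v * \<Phi> y) = fps_cutoff (Suc n) (v * \<Phi> z)"
      by (intro fps_cutoff_Suc_mult_cong v0 \<Phi> Suc)
    then have "fps_cutoff (Suc n) (h + v * \<Phi> y) = fps_cutoff (Suc n) (h + v * \<Phi> z)"
      by (simp add: fps_cutoff_add)
    then show ?case using y z by simp
  qed simp
  then show ?thesis by (rule fps_eq_cutoffI)
qed

lemma fps_reciprocal_substitution_inverse:
  fixes B T v w :: "'a::comm_ring_1 fps"
  assumes w: "w * (1 - fps_X * T) = fps_X" and T: "T = B oo w"
    and v: "v * (1 + fps_X * B) = fps_X"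
  shows "B = T oo v"
proof -
  have w0: "w $ 0 = 0" and v0: "v $ 0 = 0"
    using arg_cong[OF w, of "\<lambda>f. f $ 0"] arg_cong[OF v, of "\<lambda>f. f $ 0"] by simp_all
  define y where "y = w oo v"
  have Tv: "T oo v = B oo y"
    unfolding T y_def by (rule fps_compose_assoc_ring[OF w0 v0, symmetric])
  have "(w * (1 - fps_X * T)) oo v = v"
    using w fps_X_power_compose_ring[OF v0, of 1] by simp
  then have "y * (1 - v * (B oo y)) = v"
    by (simp add: fps_compose_mult_distrib_ring[OF v0] fps_compose_sub_distrib Tv y_def[symmetric]
        fps_X_power_compose_ring[OF v0, of 1, simplified])
  \<comment> \<open>y and fps_X solve the same equation, which has a unique solution as v $ 0 = 0.\<close>
  then have y_eq: "y = v + v * (y * (B oo y))"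
    by (simp add: algebra_simps)
  have X_eq: "fps_X = v + v * (fps_X * (B oo fps_X))"
    using v by (simp add: algebra_simps)
  have "y = fps_X"
    by (rule fps_eq_by_contraction[OF v0 _ y_eq X_eq])
      (intro fps_cutoff_mult_cong fps_compose_cutoff_cong_right)
  then show ?thesis using Tv by simp
qed

lemma map_poly_fps_of_poly_add:
  "map_poly fps_of_poly (p + q) = map_poly fps_of_poly p + map_poly fps_of_poly q"
  by (rule poly_eqI) (simp add: coeff_map_poly fps_of_poly_add)

lemma map_poly_fps_of_poly_mult:
  "map_poly fps_of_poly (p * q) = map_poly fps_of_poly p * map_poly fps_of_poly q"
  by (rule poly_eqI) (simp add: coeff_map_poly coeff_mult fps_of_poly_sum fps_of_poly_mult)

lemma map_poly_fps_of_poly_power: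
  "map_poly fps_of_poly (p ^ n) = map_poly fps_of_poly p ^ n"
  by (induction n) (simp_all add: map_poly_fps_of_poly_mult)

lemma map_poly_fps_of_poly_sum:
  "map_poly fps_of_poly (\<Sum>x\<in>A. f x) = (\<Sum>x\<in>A. map_poly fps_of_poly (f x))"
  by (induction A rule: infinite_finite_induct) (simp_all add: map_poly_fps_of_poly_add)

lemma poly_eq_sum_upto:
  fixes p :: "'a::comm_semiring_1 poly"
  assumes "degree p \<le> N"
  shows "poly p x = (\<Sum>i\<le>N. coeff p i * x ^ i)"
  by (subst poly_as_sum_of_monoms'[OF assms, symmetric]) (simp add: poly_sum poly_monom)

(* For degree q \<le> D, the polynomial Q^D q(t/Q). *)
definition homogenize :: "nat \<Rightarrow> 'a::comm_ring_1 poly poly \<Rightarrow> 'a poly \<Rightarrow> 'a poly poly" where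
  "homogenize D Q q = (\<Sum>k\<le>D. smult (monom (coeff q k) k) (Q ^ (D - k)))"

lemma homogenize_0 [simp]: "homogenize D Q 0 = 0"
  by (simp add: homogenize_def)

lemma coeff_0_homogenize:
  assumes "coeff Q 0 = 1" "degree q \<le> D"
  shows "coeff (homogenize D Q q) 0 = q"
  using assms by (simp add: homogenize_def coeff_sum coeff_0_power poly_as_sum_of_monoms')

lemma poly_homogenize:
  assumes wU: "w * U = fps_X" and Q: "poly (map_poly fps_of_poly Q) G = U" and q: "degree q \<le> D"
  shows "poly (map_poly fps_of_poly (homogenize D Q q)) G = U ^ D * poly (map_poly fps_const q) w"
proof -
  have scale: "U ^ D * w ^ k = fps_X ^ k * U ^ (D - k)" if "k \<le> D" for k
  proof -
    have "U ^ D = U ^ k * U ^ (D - k)"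
      using that by (simp flip: power_add)
    then have "U ^ D * w ^ k = (w * U) ^ k * U ^ (D - k)"
      by (simp add: power_mult_distrib mult_ac)
    then show ?thesis using wU by simp
  qed
  have "U ^ D * poly (map_poly fps_const q) w = (\<Sum>k\<le>D. fps_const (coeff q k) * (U ^ D * w ^ k))"
    using q by (simp add: poly_eq_sum_upto degree_map_poly coeff_map_poly sum_distrib_left mult_ac)
  also have "\<dots> = (\<Sum>k\<le>D. fps_const (coeff q k) * fps_X ^ k * U ^ (D - k))"
    by (intro sum.cong refl) (simp add: scale mult.assoc)
  also have "\<dots> = poly (map_poly fps_of_poly (homogenize D Q q)) G"
    by (simp add: homogenize_def map_poly_fps_of_poly_sum map_poly_smult fps_of_poly_mult
        map_poly_fps_of_poly_power poly_sum Q fps_of_poly_monom)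
  finally show ?thesis ..
qed

(* Q^D P(t/Q, y) *)
definition homogenize_coeffs ::
    "nat \<Rightarrow> 'a::comm_ring_1 poly poly \<Rightarrow> 'a poly poly \<Rightarrow> 'a poly poly" where
  "homogenize_coeffs D Q P = (\<Sum>i\<le>degree P. monom 1 i * homogenize D Q (coeff P i))"

lemma poly_homogenize_coeffs:
  assumes "w * U = fps_X" "poly (map_poly fps_of_poly Q) G = U" "\<And>i. degree (coeff P i) \<le> D"
  shows "poly (map_poly fps_of_poly (homogenize_coeffs D Q P)) G =
    U ^ D * (\<Sum>i\<le>degree P. poly (map_poly fps_const (coeff P i)) w * G ^ i)"
proof -
  have "poly (map_poly fps_of_poly (homogenize_coeffs D Q P)) G =
      (\<Sum>i\<le>degree P. G ^ i * poly (map_poly fps_of_poly (homogenize D Q (coeff P i))) G)"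
    by (simp add: homogenize_coeffs_def map_poly_fps_of_poly_sum map_poly_fps_of_poly_mult poly_sum
        map_poly_monom poly_monom)
  also have "\<dots> = U ^ D * (\<Sum>i\<le>degree P. poly (map_poly fps_const (coeff P i)) w * G ^ i)"
    by (simp add: poly_homogenize[OF assms] sum_distrib_left mult_ac)
  finally show ?thesis .
qed

lemma homogenize_coeffs_nonzero:
  assumes "P \<noteq> 0" "coeff Q 0 = 1" "\<And>i. degree (coeff P i) \<le> D"
  shows "homogenize_coeffs D Q P \<noteq> 0"
proof -
  \<comment> \<open>The lowest nonzero coefficient of P in y survives, as Q is 1 modulo y.\<close>
  define i0 where "i0 = (LEAST i. coeff P i \<noteq> 0)"
  have "\<exists>i. coeff P i \<noteq> 0"
    using assms(1) leading_coeff_neq_0 by blast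
  then have i0: "coeff P i0 \<noteq> 0"
    unfolding i0_def by (rule LeastI_ex)
  then have "i0 \<le> degree P"
    by (rule le_degree)
  have "coeff (homogenize_coeffs D Q P) i0 = (\<Sum>i\<le>degree P. if i = i0 then coeff P i0 else 0)"
    unfolding homogenize_coeffs_def coeff_sum coeff_monom_mult
  proof (intro sum.cong refl)
    fix i
    consider "i0 < i" | "i < i0" | "i = i0"
      by linarith
    then show "(if i0 < i then 0 else 1 * coeff (homogenize D Q (coeff P i)) (i0 - i)) =
        (if i = i0 then coeff P i0 else 0)"
    proof cases
      case 2
      then have "coeff P i = 0"
        unfolding i0_def using not_less_Least by blast
      with 2 show ?thesis by simp
    qed (simp_all add: coeff_0_homogenize assms(2,3))
  qed
  also have "\<dots> = coeff P i0"
    using \<open>i0 \<le> degree P\<close> by simp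
  finally show ?thesis
    using i0 by auto
qed

lemma fps_algebraic_compose_reciprocal:
  fixes F G w :: "'a::comm_ring_1 fps"
  assumes "fps_algebraic F" and G: "G = F oo w" and w: "w * (1 + fps_const c * fps_X * G) = fps_X"
  shows "fps_algebraic G"
proof -
  obtain P where "P \<noteq> 0" and PF: "poly (map_poly fps_of_poly P) F = 0"
    using assms(1) by (auto simp: fps_algebraic_def)
  \<comment> \<open>Q = 1 + c t y\<close>
  define Q :: "'a poly poly" where "Q = [:1, [:0, c:]:]"
  define D where "D = (\<Sum>i\<le>degree P. degree (coeff P i))"
  have w0: "w $ 0 = 0"
    using arg_cong[OF w, of "\<lambda>f. f $ 0"] by simp
  have deg_le_D: "degree (coeff P i) \<le> D" for i
    unfolding D_def by (cases "i \<le> degree P") (auto intro: member_le_sum simp: coeff_eq_0)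
  have QG: "poly (map_poly fps_of_poly Q) G = 1 + fps_const c * fps_X * G"
    by (simp add: Q_def map_poly_pCons fps_of_poly_pCons mult_ac)
  have "poly (map_poly fps_of_poly P) F oo w =
      (\<Sum>i\<le>degree P. poly (map_poly fps_const (coeff P i)) w * G ^ i)"
    by (simp add: poly_eq_sum_upto[of _ "degree P"] degree_map_poly coeff_map_poly G
        fps_compose_sum_distrib fps_compose_mult_distrib_ring[OF w0] fps_compose_power_ring[OF w0]
        fps_of_poly_compose[OF w0])
  then have "poly (map_poly fps_of_poly (homogenize_coeffs D Q P)) G = 0"
    using PF by (simp add: poly_homogenize_coeffs[OF w QG deg_le_D])
  moreover have "homogenize_coeffs D Q P \<noteq> 0"
    by (rule homogenize_coeffs_nonzero) (simp_all add: \<open>P \<noteq> 0\<close> Q_def deg_le_D)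
  ultimately show ?thesis
    unfolding fps_algebraic_def by blast
qed

fun branch_of :: "bpt \<Rightarrow> bpt" where
  "branch_of Leaf = Leaf"
| "branch_of (Node L R) =
     (if L \<noteq> Leaf \<and> R \<noteq> Leaf then branch_of L else Node (branch_of L) (branch_of R))"

fun pruned_weight :: "(bpt \<Rightarrow> 'a::comm_ring_1) \<Rightarrow> bpt \<Rightarrow> 'a" where
  "pruned_weight \<tau> Leaf = 1"
| "pruned_weight \<tau> (Node L R) =
     (if L \<noteq> Leaf \<and> R \<noteq> Leaf then pruned_weight \<tau> L * \<tau> R
      else pruned_weight \<tau> L * pruned_weight \<tau> R)"

lemma branch_of_eq_Leaf_iff [simp]: "branch_of T = Leaf \<longleftrightarrow> T = Leaf"
  by (induction T) auto

lemma is_branch_Node: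
  "is_branch (Node L R) \<longleftrightarrow>
     (L = Leaf \<and> R = Leaf) \<or> (R = Leaf \<and> is_branch L) \<or> (L = Leaf \<and> is_branch R)"
  by (cases L; cases R) auto

lemma is_branch_branch_of: "T \<noteq> Leaf \<Longrightarrow> is_branch (branch_of T)"
  by (induction T) (auto simp: is_branch_Node)

lemma nverts_branch_of_le: "nverts (branch_of T) \<le> nverts T"
  by (induction T) auto

(* Zipper-style contexts, stored from the hole outwards: Left_of C R has its hole as the left
   child of a vertex with right subtree R, and that vertex sits in the hole of C. *)
datatype tree_context = Hole | Left_of tree_context bpt | Right_of bpt tree_context

fun plug :: "tree_context \<Rightarrow> bpt \<Rightarrow> bpt" where
  "plug Hole X = X"
| "plug (Left_of C R) X = plug C (Node X R)"
| "plug (Right_of L C) X = plug C (Node L X)"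

lemma insertion_plug: "insertion X R Y \<Longrightarrow> insertion (plug C X) R (plug C Y)"
  by (induction C arbitrary: X Y) (auto intro: insertion.left insertion.right)

lemma plug_eq_Leaf_iff [simp]: "plug C X = Leaf \<longleftrightarrow> C = Hole \<and> X = Leaf"
  by (induction C arbitrary: X) auto

lemma troupe_plug_Node:
  assumes "weighted_troupe \<tau>" "L \<noteq> Leaf" "R \<noteq> Leaf"
  shows "\<tau> (plug C (Node L R)) = \<tau> (plug C L) * \<tau> R"
proof -
  obtain L1 L2 where "L = Node L1 L2"
    using \<open>L \<noteq> Leaf\<close> by (cases L) auto
  then have "insertion (plug C L) R (plug C (Node L R))"
    by (auto intro: insertion_plug insertion.here)
  with assms show ?thesis
    unfolding weighted_troupe_def by auto
qed

lemma troupe_plug_branch_of: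
  assumes "weighted_troupe \<tau>"
  shows "\<tau> (plug C T) = \<tau> (plug C (branch_of T)) * pruned_weight \<tau> T"
proof (induction T arbitrary: C)
  case (Node L R)
  show ?case
  proof (cases "L \<noteq> Leaf \<and> R \<noteq> Leaf")
    case True
    then have "\<tau> (plug C (Node L R)) = \<tau> (plug C L) * \<tau> R"
      using troupe_plug_Node[OF assms] by blast
    then show ?thesis
      using True Node.IH(1)[of C] by (simp add: mult.assoc)
  next
    case False
    have "\<tau> (plug C (Node L R)) = \<tau> (plug (Left_of C R) (branch_of L)) * pruned_weight \<tau> L"
      using Node.IH(1)[of "Left_of C R"] by simp
    also have "\<tau> (plug (Left_of C R) (branch_of L)) =
        \<tau> (plug (Right_of (branch_of L) C) (branch_of R)) * pruned_weight \<tau> R"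
      using Node.IH(2)[of "Right_of (branch_of L) C"] by simp
    finally show ?thesis
      using False by (auto simp: mult_ac)
  qed
qed simp

lemma troupe_branch_of:
  "weighted_troupe \<tau> \<Longrightarrow> \<tau> T = \<tau> (branch_of T) * pruned_weight \<tau> T"
  using troupe_plug_branch_of[of \<tau> Hole T] by simp

definition trees_of_size :: "nat \<Rightarrow> bpt set" where
  "trees_of_size n = {T. nverts T = n}"

lemma trees_of_size_0: "trees_of_size 0 = {Leaf}"
  unfolding trees_of_size_def by (auto elim: nverts.elims)

lemma trees_of_size_Suc:
  "trees_of_size (Suc n) =
     (\<lambda>(i, L, R). Node L R) ` (SIGMA i:{..n}. trees_of_size i \<times> trees_of_size (n - i))"
proof (intro set_eqI iffI)
  fix T assume "T \<in> trees_of_size (Suc n)"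
  then obtain L R where "T = Node L R" "nverts L + nverts R = n"
    unfolding trees_of_size_def by (cases T) auto
  then show "T \<in> (\<lambda>(i, L, R). Node L R) ` (SIGMA i:{..n}. trees_of_size i \<times> trees_of_size (n - i))"
    unfolding trees_of_size_def by (intro image_eqI[where x = "(nverts L, L, R)"]) auto
qed (auto simp: trees_of_size_def)

lemma finite_trees_of_size: "finite (trees_of_size n)"
proof (induction n rule: less_induct)
  case (less n)
  then show ?case
    by (cases n) (auto simp: trees_of_size_0 trees_of_size_Suc
        intro!: finite_imageI finite_SigmaI finite_cartesian_product)
qed

lemma sum_trees_of_size_Suc:
  "(\<Sum>T\<in>trees_of_size (Suc n). f T) =
     (\<Sum>i\<le>n. \<Sum>L\<in>trees_of_size i. \<Sum>R\<in>trees_of_size (n - i). f (Node L R))"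
proof -
  have "inj_on (\<lambda>(i, L, R). Node L R) (SIGMA i:{..n}. trees_of_size i \<times> trees_of_size (n - i))"
    by (auto simp: inj_on_def trees_of_size_def)
  then have "(\<Sum>T\<in>trees_of_size (Suc n). f T) =
      (\<Sum>(i, L, R)\<in>(SIGMA i:{..n}. trees_of_size i \<times> trees_of_size (n - i)). f (Node L R))"
    unfolding trees_of_size_Suc by (simp add: sum.reindex case_prod_unfold)
  also have "\<dots> = (\<Sum>i\<le>n. \<Sum>(L, R)\<in>trees_of_size i \<times> trees_of_size (n - i). f (Node L R))"
    by (rule sum.Sigma[symmetric]) (simp_all add: finite_trees_of_size)
  also have "\<dots> = (\<Sum>i\<le>n. \<Sum>L\<in>trees_of_size i. \<Sum>R\<in>trees_of_size (n - i). f (Node L R))"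
    by (simp only: sum.cartesian_product)
  finally show ?thesis .
qed

lemma tree_gf_nth:
  "\<tau> Leaf = 0 \<Longrightarrow> tree_gf \<tau> $ n = (\<Sum>T\<in>trees_of_size n. \<tau> T)"
  by (auto simp: tree_gf_def trees_of_size_0 trees_of_size_def[symmetric])

lemma branch_gf_nth: "branch_gf \<tau> $ n = (\<Sum>b\<in>{b. is_branch b \<and> nverts b = n}. \<tau> b)"
proof -
  have "nverts b \<noteq> 0" if "is_branch b" for b
    using that by (cases b) auto
  then show ?thesis
    by (fastforce simp: branch_gf_def intro!: sum.neutral)
qed

definition pruned_gf :: "(bpt \<Rightarrow> 'a::comm_ring_1) \<Rightarrow> bpt \<Rightarrow> 'a fps" where
  "pruned_gf \<tau> b =
     Abs_fps (\<lambda>n. \<Sum>T\<in>trees_of_size n. if branch_of T = b then pruned_weight \<tau> T else 0)"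

lemma pruned_gf_Leaf: "pruned_gf \<tau> Leaf = 1"
proof (rule fps_ext)
  fix n
  have "trees_of_size n = {Leaf}" if "n = 0"
    using that trees_of_size_0 by simp
  moreover have "Leaf \<notin> trees_of_size n" if "n \<noteq> 0"
    using that by (simp add: trees_of_size_def)
  ultimately show "pruned_gf \<tau> Leaf $ n = 1 $ n"
    by (auto simp: pruned_gf_def intro!: sum.neutral)
qed

(* As a branch has at most one child, the second summand vanishes when L and R are both
   nonempty; otherwise the first one vanishes because tau Leaf = 0. *)
lemma pruned_weight_Node_split:
  assumes "\<tau> Leaf = 0" "is_branch (Node bl br)"
  shows "(if branch_of (Node L R) = Node bl br then pruned_weight \<tau> (Node L R) else 0) =
    (if branch_of L = Node bl br then pruned_weight \<tau> L else 0) * \<tau> R +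
    (if branch_of L = bl then pruned_weight \<tau> L else 0) *
    (if branch_of R = br then pruned_weight \<tau> R else 0)"
  using assms by (cases "L = Leaf"; cases "R = Leaf") (auto simp: is_branch_Node)

lemma pruned_gf_Node:
  assumes "\<tau> Leaf = 0" "is_branch (Node bl br)"
  shows "pruned_gf \<tau> (Node bl br) =
    fps_X * (pruned_gf \<tau> (Node bl br) * tree_gf \<tau> + pruned_gf \<tau> bl * pruned_gf \<tau> br)"
proof (rule fps_ext)
  fix n
  let ?g = "\<lambda>b T. if branch_of T = b then pruned_weight \<tau> T else 0"
  show "pruned_gf \<tau> (Node bl br) $ n =
      (fps_X * (pruned_gf \<tau> (Node bl br) * tree_gf \<tau> + pruned_gf \<tau> bl * pruned_gf \<tau> br)) $ n"
  proof (cases n)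
    case (Suc m)
    have "pruned_gf \<tau> (Node bl br) $ Suc m = (\<Sum>i\<le>m. \<Sum>L\<in>trees_of_size i. \<Sum>R\<in>trees_of_size (m - i).
        ?g (Node bl br) L * \<tau> R + ?g bl L * ?g br R)"
      unfolding pruned_gf_def fps_nth_Abs_fps sum_trees_of_size_Suc
        pruned_weight_Node_split[where \<tau> = \<tau> and bl = bl and br = br, OF assms] ..
    also have "\<dots> = (\<Sum>i\<le>m. pruned_gf \<tau> (Node bl br) $ i * tree_gf \<tau> $ (m - i)) +
        (\<Sum>i\<le>m. pruned_gf \<tau> bl $ i * pruned_gf \<tau> br $ (m - i))"
      by (simp add: sum.distrib pruned_gf_def tree_gf_nth[of \<tau>, OF assms(1)] sum_product)
    also have "\<dots> = (pruned_gf \<tau> (Node bl br) * tree_gf \<tau> + pruned_gf \<tau> bl * pruned_gf \<tau> br) $ m"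
      by (simp add: fps_mult_nth atLeast0AtMost)
    finally show ?thesis
      by (simp add: Suc)
  qed (simp add: pruned_gf_def trees_of_size_0)
qed

lemma pruned_gf_branch:
  assumes \<tau>0: "\<tau> Leaf = 0" and w: "w * (1 - fps_X * tree_gf \<tau>) = fps_X"
  shows "b = Leaf \<or> is_branch b \<Longrightarrow> pruned_gf \<tau> b = w ^ nverts b"
proof (induction b)
  case (Node bl br)
  let ?U = "1 - fps_X * tree_gf \<tau>"
  have b: "is_branch (Node bl br)"
    using Node.prems by simp
  then have IH: "pruned_gf \<tau> bl = w ^ nverts bl" "pruned_gf \<tau> br = w ^ nverts br"
    using Node.IH by (auto simp: is_branch_Node)
  have "pruned_gf \<tau> (Node bl br) * ?U = fps_X * (pruned_gf \<tau> bl * pruned_gf \<tau> br)"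
    using pruned_gf_Node[of \<tau>, OF \<tau>0 b] by (simp add: algebra_simps)
  also have "\<dots> = (w * ?U) * (w ^ nverts bl * w ^ nverts br)"
    by (simp add: IH w)
  also have "\<dots> = w ^ nverts (Node bl br) * ?U"
    by (simp add: power_add mult_ac)
  finally show ?case
    by (rule fps_mult_right_cancel[rotated]) simp
qed (simp add: pruned_gf_Leaf)

lemma tree_gf_eq_branch_gf_compose:
  assumes "weighted_troupe \<tau>" and w: "w * (1 - fps_X * tree_gf \<tau>) = fps_X"
  shows "tree_gf \<tau> = branch_gf \<tau> oo w"
proof (rule fps_ext)
  fix n
  have \<tau>0: "\<tau> Leaf = 0"
    using assms(1) by (simp add: weighted_troupe_def)
  define S where "S = {b. is_branch b \<and> nverts b \<le> n}"
  have "finite S"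
    by (rule finite_subset[OF _ finite_UN_I[OF finite_atMost[of n] finite_trees_of_size]])
      (auto simp: S_def trees_of_size_def)
  have "(branch_gf \<tau> oo w) $ n = (\<Sum>m\<le>n. \<Sum>b\<in>{b \<in> S. nverts b = m}. \<tau> b * (w ^ nverts b) $ n)"
    by (auto simp: fps_compose_nth branch_gf_nth sum_distrib_right atLeast0AtMost S_def
        intro!: sum.cong)
  also have "\<dots> = (\<Sum>b\<in>S. \<tau> b * pruned_gf \<tau> b $ n)"
    using \<open>finite S\<close> pruned_gf_branch[of \<tau>, OF \<tau>0 w] by (subst sum.group) (auto simp: S_def)
  also have "\<dots> = (\<Sum>T\<in>trees_of_size n. \<Sum>b\<in>S.
      if branch_of T = b then \<tau> b * pruned_weight \<tau> T else 0)"
    by (simp add: pruned_gf_def sum_distrib_left if_distrib sum.swap[of _ S] cong: if_cong)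
  also have "\<dots> = (\<Sum>T\<in>trees_of_size n. \<tau> T)"
  proof (intro sum.cong refl)
    fix T assume "T \<in> trees_of_size n"
    then have "branch_of T \<in> S \<longleftrightarrow> T \<noteq> Leaf"
      using is_branch_branch_of[of T] nverts_branch_of_le[of T]
      by (auto simp: S_def trees_of_size_def)
    then show "(\<Sum>b\<in>S. if branch_of T = b then \<tau> b * pruned_weight \<tau> T else 0) = \<tau> T"
      using \<open>finite S\<close> troupe_branch_of[OF assms(1), of T] \<tau>0 by (simp add: sum.delta)
  qed
  finally show "tree_gf \<tau> $ n = (branch_gf \<tau> oo w) $ n"
    by (simp add: tree_gf_nth[of \<tau>, OF \<tau>0])
qed

theorem corollary5p2:
  fixes \<tau> :: "bpt \<Rightarrow> 'a::comm_ring_1"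
  assumes "weighted_troupe \<tau>"
  shows "fps_algebraic (branch_gf \<tau>) \<longleftrightarrow> fps_algebraic (tree_gf \<tau>)"
proof -
  define w where "w = fps_X * fps_right_inverse (1 - fps_X * tree_gf \<tau>) 1"
  define v where "v = fps_X * fps_right_inverse (1 + fps_X * branch_gf \<tau>) 1"
  have w: "w * (1 - fps_X * tree_gf \<tau>) = fps_X"
    unfolding w_def by (rule fps_X_over_unit) simp
  have v: "v * (1 + fps_X * branch_gf \<tau>) = fps_X"
    unfolding v_def by (rule fps_X_over_unit) simp
  have T: "tree_gf \<tau> = branch_gf \<tau> oo w"
    by (rule tree_gf_eq_branch_gf_compose[OF assms w])
  have B: "branch_gf \<tau> = tree_gf \<tau> oo v"
    by (rule fps_reciprocal_substitution_inverse[OF w T v])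
  have "w * (1 + fps_const (-1) * fps_X * tree_gf \<tau>) = fps_X"
    using w by (simp add: fps_const_neg[symmetric] del: fps_const_neg)
  moreover have "v * (1 + fps_const 1 * fps_X * branch_gf \<tau>) = fps_X"
    using v by simp
  ultimately show ?thesis
    using fps_algebraic_compose_reciprocal[OF _ T] fps_algebraic_compose_reciprocal[OF _ B] by blast
qed

end
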